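(* Consider the DC network $$-L_\alpha\dot I_\alpha=V_\alpha-u_\alpha\circ V_{s\alpha},\quad -L_\beta\dot I_\beta=(\mathbf 1_{n_\beta}-u_\beta)\circ V_\beta-V_{s\beta},\quad -L_l\dot I_l=D^\top V+R_lI_l,$$ $$C_\alpha\dot V_\alpha=I_\alpha-G_\alpha V_\alpha+D_\alpha I_l,\quad C_\beta\dot V_\beta=(\mathbf 1_{n_\beta}-u_\beta)\circ I_\beta-G_\beta V_\beta+D_\beta I_l,$$ extended by $\dot u=\upsilon$ where $u=(u_\alpha^\top,u_\beta^\top)^\top$. Let $I=(I_\alpha^\top,I_\beta^\top,I_l^\top)^\top$, $V=(V_\alpha^\top,V_\beta^\top)^\top$, $L=\mathrm{diag}(L_\alpha,L_\beta,L_l)$, $C=\mathrm{diag}(C_\alpha,C_\beta)$. Then the system is passive with respect to the storage function $S=\tfrac12\dot I^\top L\dot I+\tfrac12\dot V^\top C\dot V$ and the port-variables $\dot u$ and $$y_{\mathrm{DC}}=\begin{bmatrix}\dot I_\alpha\circ V_{s\alpha}\\ \dot I_\beta\circ V_\beta-\dot V_\beta\circ I_\beta\end{bmatrix},$$ i.e. $\dot S\le\dot u^\top y_{\mathrm{DC}}$.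
   Context: The network is a connected undirected graph with $n_\alpha$ buck-converter nodes, $n_\beta$ boost-converter nodes ($n=n_\alpha+n_\beta$) and $m$ lines; $D\in\mathbb{R}^{n\times m}$ is the incidence matrix (entry $+1$/$-1$ if node $i$ is the positive/negative end of line $k$, else $0$), and $D_\alpha\in\mathbb{R}^{n_\alpha\times m}$, $D_\beta\in\mathbb{R}^{n_\beta\times m}$ are its rows for buck and boost nodes. $I_\alpha,V_\alpha,V_{s\alpha},u_\alpha\in\mathbb{R}^{n_\alpha}$; $I_\beta,V_\beta,V_{s\beta},u_\beta\in\mathbb{R}^{n_\beta}$; $I_l\in\mathbb{R}^m$ line currents; $V_{s\alpha},V_{s\beta}$ constant sources; $L_\alpha,L_\beta,L_l,C_\alpha,C_\beta,R_l,G_\alpha,G_\beta$ are positive definite diagonal matrices. $\circ$ is the entrywise (Hadamard) product, $\mathbf 1_{n_\beta}$ the all-ones vector, $u\in[0,1]^n$ duty cycles. *)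

theory Defs
  imports "HOL-Analysis.Analysis"
begin

definition hmul :: "real ^ 'n \<Rightarrow> real ^ 'n \<Rightarrow> real ^ 'n" (infixl "\<circ>\<^sub>H" 70) where
  "x \<circ>\<^sub>H y = (\<chi> i. x $ i * y $ i)"

definition pd_diag :: "real ^ 'n ^ 'n \<Rightarrow> bool" where
  "pd_diag A \<longleftrightarrow> (\<forall>i j. i \<noteq> j \<longrightarrow> A $ i $ j = 0) \<and> (\<forall>i. A $ i $ i > 0)"

text \<open>Full incidence matrix assembled from the buck rows and the boost rows;
  nodes are indexed by the sum type (Inl = buck node, Inr = boost node).\<close>
definition inc_full :: "real ^ 'l ^ 'a \<Rightarrow> real ^ 'l ^ 'b \<Rightarrow> ('a + 'b) \<Rightarrow> 'l \<Rightarrow> real" where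
  "inc_full Da Db p k = (case p of Inl i \<Rightarrow> Da $ i $ k | Inr j \<Rightarrow> Db $ j $ k)"

definition is_incidence :: "real ^ 'l ^ 'a \<Rightarrow> real ^ 'l ^ 'b \<Rightarrow> bool" where
  "is_incidence Da Db \<longleftrightarrow>
     (\<forall>k. \<exists>p q. p \<noteq> q \<and> inc_full Da Db p k = 1 \<and> inc_full Da Db q k = -1 \<and>
            (\<forall>r. r \<noteq> p \<and> r \<noteq> q \<longrightarrow> inc_full Da Db r k = 0))"

definition inc_connected :: "real ^ 'l ^ 'a \<Rightarrow> real ^ 'l ^ 'b \<Rightarrow> bool" where
  "inc_connected Da Db \<longleftrightarrow>
     (\<forall>p q. (\<lambda>x y. \<exists>k. inc_full Da Db x k \<noteq> 0 \<and> inc_full Da Db y k \<noteq> 0)\<^sup>*\<^sup>* p q)"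

end

theory Submission
  imports Defs
begin

text \<open>
  Differentiated once in time, the network equations describe a network of the same form,
  driven by the duty-cycle rates dua, dub in place of the sources. Pairing each equation
  with the matching state derivative, the interconnection terms through D and the converter
  couplings through 1 - ub are skew-symmetric and cancel, the resistive terms Rl, Ga, Gb
  dissipate, and only the supply rate remains.
\<close>

interpretation hmul: bounded_bilinear "(\<circ>\<^sub>H) :: real ^ 'n \<Rightarrow> real ^ 'n \<Rightarrow> real ^ 'n"
proof -
  have "bilinear ((\<circ>\<^sub>H) :: real ^ 'n \<Rightarrow> real ^ 'n \<Rightarrow> real ^ 'n)"
    unfolding bilinear_def linear_iff hmul_def by (auto simp: vec_eq_iff algebra_simps)
  then show "bounded_bilinear ((\<circ>\<^sub>H) :: real ^ 'n \<Rightarrow> real ^ 'n \<Rightarrow> real ^ 'n)"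
    by (rule bilinear_conv_bounded_bilinear[THEN iffD1])
qed

declare hmul.has_vector_derivative [derivative_intros]

lemma inner_hmul_left_commute: "x \<bullet> (y \<circ>\<^sub>H z) = y \<bullet> (x \<circ>\<^sub>H z)"
  unfolding inner_vec_def hmul_def by (simp add: mult.left_commute)

lemma inner_hmul_commute: "x \<bullet> (w \<circ>\<^sub>H y) = y \<bullet> (w \<circ>\<^sub>H x)"
  unfolding inner_vec_def hmul_def by (simp add: mult.commute mult.left_commute)

lemma inner_transpose_matrix_vector:
  fixes A :: "real ^ 'n ^ 'm"
  shows "x \<bullet> (transpose A *v y) = y \<bullet> (A *v x)"
  by (simp add: inner_commute[of x] dot_lmul_matrix)

lemma has_vector_derivative_matrix_vector_mult [derivative_intros]:
  fixes A :: "real ^ 'n ^ 'm"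
  assumes "(f has_vector_derivative f') F"
  shows "((\<lambda>s. A *v f s) has_vector_derivative A *v f') F"
  by (rule bounded_linear.has_vector_derivative[OF matrix_vector_mul_bounded_linear assms])

lemma has_real_derivative_quadratic_form:
  fixes A :: "real ^ 'n ^ 'n"
  assumes "transpose A = A" and "(f has_vector_derivative f') (at t)"
  shows "((\<lambda>s. f s \<bullet> (A *v f s)) has_real_derivative 2 * (f t \<bullet> (A *v f'))) (at t)"
proof -
  have "f' \<bullet> (A *v f t) = f t \<bullet> (A *v f')"
    by (metis assms(1) inner_transpose_matrix_vector)
  then show ?thesis
    unfolding has_real_derivative_iff_has_vector_derivative
    by (auto intro: has_vector_derivative_eq_rhs
        bounded_bilinear.has_vector_derivative[OF bounded_bilinear_inner assms(2)
          has_vector_derivative_matrix_vector_mult[OF assms(2)]])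
qed

lemma vector_derivative_unique_at_eq:
  assumes "\<And>s. f s = g s"
    and "(f has_vector_derivative f') (at t)" and "(g has_vector_derivative g') (at t)"
  shows "f' = g'"
  using assms vector_derivative_unique_at by (metis ext)

lemma pd_diag_transpose: "pd_diag A \<Longrightarrow> transpose A = A"
  unfolding pd_diag_def transpose_def by (auto simp: vec_eq_iff) metis

lemma diagonal_quadratic_form:
  assumes "\<And>i j. i \<noteq> j \<Longrightarrow> A $ i $ j = 0"
  shows "x \<bullet> (A *v x) = (\<Sum>i\<in>UNIV. A $ i $ i * (x $ i)\<^sup>2)"
proof -
  have "(\<Sum>j\<in>UNIV. A $ i $ j * x $ j) = A $ i $ i * x $ i" for i
    using assms by (subst sum.remove[of _ i]) auto
  then show ?thesis
    by (simp add: inner_vec_def matrix_vector_mult_def power2_eq_square mult_ac)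
qed

lemma pd_diag_quadratic_form_nonneg:
  assumes "pd_diag A"
  shows "0 \<le> x \<bullet> (A *v x)"
  using assms unfolding pd_diag_def
  by (simp add: diagonal_quadratic_form less_imp_le sum_nonneg)

lemma incremental_power_balance:
  fixes La Ca Ga :: "real ^ 'a ^ 'a" and Lb Cb Gb :: "real ^ 'b ^ 'b" and Ll Rl :: "real ^ 'l ^ 'l"
    and Da :: "real ^ 'l ^ 'a" and Db :: "real ^ 'l ^ 'b"
  assumes "- (La *v ddIa) = dVa - dua \<circ>\<^sub>H Vsa"
    and "- (Lb *v ddIb) = w \<circ>\<^sub>H dVb - dub \<circ>\<^sub>H Vb"
    and "- (Ll *v ddIl) = transpose Da *v dVa + transpose Db *v dVb + Rl *v dIl"
    and "Ca *v ddVa = dIa - Ga *v dVa + Da *v dIl"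
    and "Cb *v ddVb = w \<circ>\<^sub>H dIb - dub \<circ>\<^sub>H Ib - Gb *v dVb + Db *v dIl"
  shows "dIa \<bullet> (La *v ddIa) + dIb \<bullet> (Lb *v ddIb) + dIl \<bullet> (Ll *v ddIl)
           + dVa \<bullet> (Ca *v ddVa) + dVb \<bullet> (Cb *v ddVb)
         = dua \<bullet> (dIa \<circ>\<^sub>H Vsa) + dub \<bullet> (dIb \<circ>\<^sub>H Vb - dVb \<circ>\<^sub>H Ib)
           - (dIl \<bullet> (Rl *v dIl) + dVa \<bullet> (Ga *v dVa) + dVb \<bullet> (Gb *v dVb))"
proof -
  have inner_eq_neg: "x \<bullet> (A *v y) = - (x \<bullet> z)" if "- (A *v y) = z" for x z y and A :: "real ^ 'm ^ 'k"
    using that by (metis inner_minus_right minus_minus)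
  have inductor_a: "dIa \<bullet> (La *v ddIa) = dua \<bullet> (dIa \<circ>\<^sub>H Vsa) - dVa \<bullet> dIa"
    using inner_eq_neg[OF assms(1)] by (simp add: inner_diff_right inner_hmul_left_commute inner_commute)
  have inductor_b: "dIb \<bullet> (Lb *v ddIb) = dub \<bullet> (dIb \<circ>\<^sub>H Vb) - dVb \<bullet> (w \<circ>\<^sub>H dIb)"
    using inner_eq_neg[OF assms(2)] inner_hmul_left_commute[of dIb dub Vb] inner_hmul_commute[of dIb w dVb]
    by (simp add: inner_diff_right)
  have line: "dIl \<bullet> (Ll *v ddIl) = - (dVa \<bullet> (Da *v dIl) + dVb \<bullet> (Db *v dIl) + dIl \<bullet> (Rl *v dIl))"
    using inner_eq_neg[OF assms(3), of dIl] by (simp only: inner_add_right inner_transpose_matrix_vector)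
  have capacitor_a: "dVa \<bullet> (Ca *v ddVa) = dVa \<bullet> dIa - dVa \<bullet> (Ga *v dVa) + dVa \<bullet> (Da *v dIl)"
    by (simp add: assms(4) inner_add_right inner_diff_right)
  have capacitor_b: "dVb \<bullet> (Cb *v ddVb)
      = dVb \<bullet> (w \<circ>\<^sub>H dIb) - dub \<bullet> (dVb \<circ>\<^sub>H Ib) - dVb \<bullet> (Gb *v dVb) + dVb \<bullet> (Db *v dIl)"
    by (simp add: assms(5) inner_add_right inner_diff_right inner_hmul_left_commute[of dVb])
  show ?thesis
    unfolding inductor_a inductor_b line capacitor_a capacitor_b inner_diff_right by simp
qed

theorem lemma4:
  fixes Da :: "real ^ 'l ^ 'a" and Db :: "real ^ 'l ^ 'b"
    and La Ca Ga :: "real ^ 'a ^ 'a" and Lb Cb Gb :: "real ^ 'b ^ 'b"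
    and Ll Rl :: "real ^ 'l ^ 'l"
    and Vsa :: "real ^ 'a" and Vsb :: "real ^ 'b"
    and Ia Va ua dIa dVa dua ddIa ddVa :: "real \<Rightarrow> real ^ 'a"
    and Ib Vb ub dIb dVb dub ddIb ddVb :: "real \<Rightarrow> real ^ 'b"
    and Il dIl ddIl :: "real \<Rightarrow> real ^ 'l"
    and t :: real
  assumes inc: "is_incidence Da Db" and conn: "inc_connected Da Db"
    and pd: "pd_diag La" "pd_diag Lb" "pd_diag Ll" "pd_diag Ca" "pd_diag Cb"
            "pd_diag Rl" "pd_diag Ga" "pd_diag Gb"
    and duty: "\<And>s i. ua s $ i \<in> {0..1}" "\<And>s j. ub s $ j \<in> {0..1}"
    and dI: "\<And>s. (Ia has_vector_derivative dIa s) (at s)"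
            "\<And>s. (Ib has_vector_derivative dIb s) (at s)"
            "\<And>s. (Il has_vector_derivative dIl s) (at s)"
    and ddI: "\<And>s. (dIa has_vector_derivative ddIa s) (at s)"
             "\<And>s. (dIb has_vector_derivative ddIb s) (at s)"
             "\<And>s. (dIl has_vector_derivative ddIl s) (at s)"
    and dV: "\<And>s. (Va has_vector_derivative dVa s) (at s)"
            "\<And>s. (Vb has_vector_derivative dVb s) (at s)"
    and ddV: "\<And>s. (dVa has_vector_derivative ddVa s) (at s)"
             "\<And>s. (dVb has_vector_derivative ddVb s) (at s)"
    and du: "\<And>s. (ua has_vector_derivative dua s) (at s)"
            "\<And>s. (ub has_vector_derivative dub s) (at s)"
    and eq1: "\<And>s. - (La *v dIa s) = Va s - ua s \<circ>\<^sub>H Vsa"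
    and eq2: "\<And>s. - (Lb *v dIb s) = (1 - ub s) \<circ>\<^sub>H Vb s - Vsb"
    and eq3: "\<And>s. - (Ll *v dIl s) = transpose Da *v Va s + transpose Db *v Vb s + Rl *v Il s"
    and eq4: "\<And>s. Ca *v dVa s = Ia s - Ga *v Va s + Da *v Il s"
    and eq5: "\<And>s. Cb *v dVb s = (1 - ub s) \<circ>\<^sub>H Ib s - Gb *v Vb s + Db *v Il s"
  shows "\<exists>S'. ((\<lambda>s. (1/2) * (dIa s \<bullet> (La *v dIa s) + dIb s \<bullet> (Lb *v dIb s) + dIl s \<bullet> (Ll *v dIl s))
                 + (1/2) * (dVa s \<bullet> (Ca *v dVa s) + dVb s \<bullet> (Cb *v dVb s)))
              has_real_derivative S') (at t)
          \<and> S' \<le> dua t \<bullet> (dIa t \<circ>\<^sub>H Vsa) + dub t \<bullet> (dIb t \<circ>\<^sub>H Vb t - dVb t \<circ>\<^sub>H Ib t)"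
proof -
  have inductor_a: "- (La *v ddIa t) = dVa t - dua t \<circ>\<^sub>H Vsa"
    by (rule vector_derivative_unique_at_eq[OF eq1])
      (auto intro!: derivative_eq_intros ddI dV du simp: hmul.zero_right)
  have inductor_b: "- (Lb *v ddIb t) = (1 - ub t) \<circ>\<^sub>H dVb t - dub t \<circ>\<^sub>H Vb t"
    by (rule vector_derivative_unique_at_eq[OF eq2])
      (auto intro!: derivative_eq_intros ddI dV du simp: hmul.diff_left hmul.zero_left)
  have line: "- (Ll *v ddIl t) = transpose Da *v dVa t + transpose Db *v dVb t + Rl *v dIl t"
    by (rule vector_derivative_unique_at_eq[OF eq3])
      (auto intro!: derivative_eq_intros ddI dV dI simp del: transpose_matrix_vector)
  have capacitor_a: "Ca *v ddVa t = dIa t - Ga *v dVa t + Da *v dIl t"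
    by (rule vector_derivative_unique_at_eq[OF eq4]) (auto intro!: derivative_eq_intros ddV dV dI)
  have capacitor_b: "Cb *v ddVb t = (1 - ub t) \<circ>\<^sub>H dIb t - dub t \<circ>\<^sub>H Ib t - Gb *v dVb t + Db *v dIl t"
    by (rule vector_derivative_unique_at_eq[OF eq5])
      (auto intro!: derivative_eq_intros ddV dV dI du simp: hmul.diff_left hmul.zero_left)
  have "0 \<le> dIl t \<bullet> (Rl *v dIl t) + dVa t \<bullet> (Ga *v dVa t) + dVb t \<bullet> (Gb *v dVb t)"
    using pd(6-8) by (intro add_nonneg_nonneg pd_diag_quadratic_form_nonneg)
  then have "dIa t \<bullet> (La *v ddIa t) + dIb t \<bullet> (Lb *v ddIb t) + dIl t \<bullet> (Ll *v ddIl t)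
      + dVa t \<bullet> (Ca *v ddVa t) + dVb t \<bullet> (Cb *v ddVb t)
      \<le> dua t \<bullet> (dIa t \<circ>\<^sub>H Vsa) + dub t \<bullet> (dIb t \<circ>\<^sub>H Vb t - dVb t \<circ>\<^sub>H Ib t)"
    unfolding incremental_power_balance[OF inductor_a inductor_b line capacitor_a capacitor_b]
    by simp
  then show ?thesis
    using pd(1-5)
    by (intro exI conjI) (auto intro!: derivative_eq_intros has_real_derivative_quadratic_form
        pd_diag_transpose ddI ddV simp: field_simps)
qed

end
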